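(* Let $\mathbf{A}\in\mathbb{R}^{(\ell m)\times(qn)}$ be a block matrix with $\ell\times q$ blocks of size $m\times n$, and let $\mathbf{B}=\mathbf{S}_{\ell,m}\mathbf{A}\mathbf{S}_{q,n}^\top$, viewed as an $m\times n$ grid of blocks of size $\ell\times q$. Let $\mathscr{A}\subseteq\mathbb{R}^{m\times n}$ be the span of the blocks of $\mathbf{A}$ and $\mathscr{B}\subseteq\mathbb{R}^{\ell\times q}$ the span of the blocks of $\mathbf{B}$. Then $\dim(\mathscr{A})=\dim(\mathscr{B})$.
   Context: Blocks of $\mathbf{A}$: $\mathbf{A}^{(\gamma,\delta)}_{\alpha\beta}=\mathbf{A}_{(\gamma-1)m+\alpha,(\delta-1)n+\beta}$ for $(\gamma,\delta)\in[\ell]\times[q]$, $(\alpha,\beta)\in[m]\times[n]$. Blocks of $\mathbf{B}$: $\mathbf{B}^{(\alpha,\beta)}_{\gamma\delta}=\mathbf{B}_{(\alpha-1)\ell+\gamma,(\beta-1)q+\delta}$. For $a,b\ge 1$ and $s=ab$, the shuffle permutation matrix $\mathbf{S}_{a,b}\in\mathbb{R}^{s\times s}$ has row $(i-1)a+j$ equal to $\mathbf{e}_{(j-1)b+i}^\top$ for $i\in[b]$, $j\in[a]$ (the rows of $\mathbf{I}_s$ with indices $i,i+b,\dots,i+(a-1)b$, stacked for $i=1,\dots,b$). In the paper's terminology, $\mathscr{A}$ (spanned by the distinct blocks of $\mathbf{A}$) is the inner blockspan and $\mathscr{B}$ (spanned by the distinct blocks of $\mathbf{B}$) is the outer blockspan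 of $\mathbf{A}$. *)

theory Defs
  imports "HOL-Analysis.Analysis" "HOL-Library.Function_Algebras"
begin

text \<open>Matrices are represented as functions nat \<Rightarrow> nat \<Rightarrow> real with explicit
  dimensions and 0-based indices; entries outside the stated range are irrelevant
  (blocks are taken to be zero outside their range).\<close>

type_synonym rmat = "nat \<Rightarrow> nat \<Rightarrow> real"

definition mscale :: "real \<Rightarrow> rmat \<Rightarrow> rmat" where
  "mscale r M = (\<lambda>i j. r * M i j)"

definition mdim :: "rmat set \<Rightarrow> nat" where
  "mdim S = vector_space.dim mscale S"

definition mspan :: "rmat set \<Rightarrow> rmat set" where
  "mspan S = module.span mscale S"

definition mmult :: "nat \<Rightarrow> rmat \<Rightarrow> rmat \<Rightarrow> rmat" where
  "mmult k M N = (\<lambda>i j. \<Sum>t<k. M i t * N t j)"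

definition mtrans :: "rmat \<Rightarrow> rmat" where
  "mtrans M = (\<lambda>i j. M j i)"

text \<open>Shuffle permutation S_{a,b} (size ab): 1-based row (i-1)a+j equals
  e_{(j-1)b+i}^T for i in [b], j in [a]; 0-based: row i*a+j has its 1 in column j*b+i.\<close>
definition shuffle :: "nat \<Rightarrow> nat \<Rightarrow> rmat" where
  "shuffle a b = (\<lambda>r c. if r < a * b \<and> c < a * b \<and> c = (r mod a) * b + r div a
                        then 1 else 0)"

definition block :: "nat \<Rightarrow> nat \<Rightarrow> rmat \<Rightarrow> nat \<Rightarrow> nat \<Rightarrow> rmat" where
  "block m n M g d = (\<lambda>al be. if al < m \<and> be < n then M (g * m + al) (d * n + be) else 0)"

definition blockspan :: "nat \<Rightarrow> nat \<Rightarrow> nat \<Rightarrow> nat \<Rightarrow> rmat \<Rightarrow> rmat set" where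
  "blockspan l q m n M = mspan {block m n M g d | g d. g < l \<and> d < q}"

end

theory Submission
  imports Defs
begin

text \<open>The blocks of \<open>A\<close> and the blocks of \<open>B\<close> are the two families of slices of one
  4-index array \<open>T g d a b = A (g*m + a) (d*n + b)\<close>: conjugation by the shuffles exchanges
  the block indices \<open>(g, d)\<close> with the indices \<open>(a, b)\<close> inside a block. Viewing \<open>T\<close> as an
  \<open>(l q) \<times> (m n)\<close> matrix, the two spans are its row space and its column space, so their
  dimensions agree because row rank equals column rank.\<close>

interpretation M: vector_space mscale
  by unfold_locales (auto simp: mscale_def fun_eq_iff algebra_simps)

lemma mdim_mspan: "mdim (mspan S) = mdim S"
  by (simp add: mdim_def mspan_def)

lemma sum_fun_apply: "sum f S x = (\<Sum>w\<in>S. f w x)"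
  by (induct S rule: infinite_finite_induct) auto

definition mtrunc :: "nat \<Rightarrow> nat \<Rightarrow> rmat \<Rightarrow> rmat" where
  "mtrunc m n M = (\<lambda>a b. if a < m \<and> b < n then M a b else 0)"

lemma dim_slices_le:
  fixes T :: "nat \<Rightarrow> nat \<Rightarrow> rmat"
  shows "mdim {mtrunc m n (T g d) | g d. g < l \<and> d < q}
       \<le> mdim {mtrunc l q (\<lambda>g d. T g d a b) | a b. a < m \<and> b < n}"
proof -
  let ?R = "{mtrunc m n (T g d) | g d. g < l \<and> d < q}"
  let ?C = "{mtrunc l q (\<lambda>g d. T g d a b) | a b. a < m \<and> b < n}"
  have "finite ?C"
    by (rule finite_image_set2) auto
  obtain Bs where Bs: "Bs \<subseteq> ?C" "M.independent Bs" "?C \<subseteq> M.span Bs" "card Bs = M.dim ?C"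
    by (rule M.basis_exists)
  have "finite Bs"
    using Bs(1) \<open>finite ?C\<close> by (rule finite_subset)
  txt \<open>The coordinates of the column slices in a basis \<open>Bs\<close> of their span,
    rearranged, give \<open>card Bs\<close> matrices \<open>X w\<close> spanning the row slices.\<close>
  define comb where "comb u = (\<Sum>w\<in>Bs. mscale (u w) w)" for u
  define x where "x a b = inv comb (mtrunc l q (\<lambda>g d. T g d a b))" for a b
  have x: "mtrunc l q (\<lambda>g d. T g d a b) = comb (x a b)" if "a < m" "b < n" for a b
  proof -
    have "mtrunc l q (\<lambda>g d. T g d a b) \<in> ?C"
      using that by blast
    with Bs(3) have "mtrunc l q (\<lambda>g d. T g d a b) \<in> range comb"
      unfolding M.span_finite[OF \<open>finite Bs\<close>] comb_def by (rule subsetD)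
    then show ?thesis
      unfolding x_def by (rule f_inv_into_f[symmetric])
  qed
  define X where "X w = mtrunc m n (\<lambda>a b. x a b w)" for w
  have row: "mtrunc m n (T g d) = (\<Sum>w\<in>Bs. mscale (w g d) (X w))" if "g < l" "d < q" for g d
  proof (intro ext)
    fix a b
    show "mtrunc m n (T g d) a b = (\<Sum>w\<in>Bs. mscale (w g d) (X w)) a b"
    proof (cases "a < m \<and> b < n")
      case True
      have "T g d a b = mtrunc l q (\<lambda>g d. T g d a b) g d"
        using that by (simp add: mtrunc_def)
      also have "\<dots> = comb (x a b) g d"
        using True x by simp
      finally show ?thesis
        using True by (simp add: mtrunc_def X_def comb_def sum_fun_apply mscale_def mult.commute)
    qed (auto simp: mtrunc_def X_def sum_fun_apply mscale_def)
  qed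
  have "?R \<subseteq> M.span (X ` Bs)"
  proof
    fix r assume "r \<in> ?R"
    then obtain g d where "g < l" "d < q" "r = mtrunc m n (T g d)"
      by blast
    then have "r = (\<Sum>w\<in>Bs. mscale (w g d) (X w))"
      by (simp add: row)
    also have "\<dots> \<in> M.span (X ` Bs)"
      by (intro M.span_sum M.span_scale M.span_base imageI)
    finally show "r \<in> M.span (X ` Bs)" .
  qed
  then have "M.dim ?R \<le> card (X ` Bs)"
    using M.dim_le_card \<open>finite Bs\<close> by blast
  also have "\<dots> \<le> card Bs"
    using \<open>finite Bs\<close> by (rule card_image_le)
  finally show ?thesis
    using Bs(4) by (simp add: mdim_def)
qed

lemma dim_slices_eq:
  fixes T :: "nat \<Rightarrow> nat \<Rightarrow> rmat"
  shows "mdim {mtrunc m n (T g d) | g d. g < l \<and> d < q}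
       = mdim {mtrunc l q (\<lambda>g d. T g d a b) | a b. a < m \<and> b < n}"
  using dim_slices_le[of m n T l q] dim_slices_le[of l q "\<lambda>a b g d. T g d a b" m n] by simp

lemma add_mult_less: "i < a \<Longrightarrow> j < b \<Longrightarrow> j * a + i < b * (a::nat)"
proof -
  assume "i < a" "j < b"
  then have "j * a + i < Suc j * a"
    by simp
  also have "\<dots> \<le> b * a"
    using \<open>j < b\<close> by (intro mult_right_mono) auto
  finally show ?thesis .
qed

lemma shuffle_index_less:
  assumes "r < a * (b::nat)"
  shows "r mod a * b + r div a < a * b"
proof (rule add_mult_less)
  show "r div a < b"
    using assms by (simp add: less_mult_imp_div_less mult.commute)
  show "r mod a < a"
    using assms by (cases "a = 0") auto
qed

lemma mmult_shuffle_left: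
  assumes "r < a * b"
  shows "mmult (a * b) (shuffle a b) M r t = M (r mod a * b + r div a) t"
proof -
  have "mmult (a * b) (shuffle a b) M r t
      = (\<Sum>s<a * b. if s = r mod a * b + r div a then M s t else 0)"
    unfolding mmult_def shuffle_def using assms by (intro sum.cong) auto
  then show ?thesis
    using shuffle_index_less[OF assms] by simp
qed

lemma mmult_transpose_shuffle_right:
  assumes "s < a * b"
  shows "mmult (a * b) M (mtrans (shuffle a b)) r s = M r (s mod a * b + s div a)"
proof -
  have "mmult (a * b) M (mtrans (shuffle a b)) r s
      = (\<Sum>t<a * b. if t = s mod a * b + s div a then M r t else 0)"
    unfolding mmult_def mtrans_def shuffle_def using assms by (intro sum.cong) auto
  then show ?thesis
    using shuffle_index_less[OF assms] by simp
qed

lemma block_eq_mtrunc: "block m n M g d = mtrunc m n (\<lambda>a b. M (g * m + a) (d * n + b))"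
  by (simp add: block_def mtrunc_def)

lemma block_shuffle_conj:
  assumes "a < m" "b < n"
  shows "block l q (mmult (q * n) (mmult (l * m) (shuffle l m) A) (mtrans (shuffle q n))) a b
       = mtrunc l q (\<lambda>g d. A (g * m + a) (d * n + b))"
proof (intro ext)
  fix g d
  show "block l q (mmult (q * n) (mmult (l * m) (shuffle l m) A) (mtrans (shuffle q n))) a b g d
      = mtrunc l q (\<lambda>g d. A (g * m + a) (d * n + b)) g d"
  proof (cases "g < l \<and> d < q")
    case True
    then have "a * l + g < l * m" "b * q + d < q * n"
      using assms add_mult_less[of g l a m] add_mult_less[of d q b n]
      by (simp_all add: mult.commute)
    then show ?thesis
      using True
      by (simp add: block_def mtrunc_def mmult_shuffle_left mmult_transpose_shuffle_right)
  qed (auto simp: block_def mtrunc_def)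
qed

theorem theorem2:
  fixes l q m n :: nat and A :: rmat
  defines "B \<equiv> mmult (q * n) (mmult (l * m) (shuffle l m) A) (mtrans (shuffle q n))"
  shows "mdim (blockspan l q m n A) = mdim (blockspan m n l q B)"
proof -
  define T where "T g d = (\<lambda>a b. A (g * m + a) (d * n + b))" for g d
  have blocks_B: "{block l q B a b | a b. a < m \<and> b < n}
      = {mtrunc l q (\<lambda>g d. T g d a b) | a b. a < m \<and> b < n}"
    unfolding B_def T_def by (intro Collect_cong ex_cong1) (auto simp: block_shuffle_conj)
  have blocks_A: "{block m n A g d | g d. g < l \<and> d < q}
      = {mtrunc m n (T g d) | g d. g < l \<and> d < q}"
    unfolding T_def by (simp add: block_eq_mtrunc)
  show ?thesis
    unfolding blockspan_def mdim_mspan blocks_A blocks_B by (rule dim_slices_eq)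
qed

end
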